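(* For $k\ge 1$ let $G_k=(V_k,E_k)$ be the graph with vertex set $V_k=\{v_0,\ldots,v_{4k}\}$ (so $|V_k|=4k+1$), specified vertex $a=v_0$, and edge set $E_k=\{(v_0,v_1),(v_0,v_2)\}\cup\bigcup_{i=0}^{k-1}\{(v_{4i+1},v_{4i+2}),(v_{4i+2},v_{4i+3}),(v_{4i+3},v_{4i+4}),(v_{4i+4},v_{4i+1})\}\cup\bigcup_{i=0}^{k-2}\{(v_{4i+4},v_{4i+5}),(v_{4i+3},v_{4i+6})\}$. Let $T_k^A$ be the spanning tree of $G_k$ with edge set $\{e_0,\ldots,e_{4k-1}\}$ where $e_i=(v_i,v_{i+1})$, and let $T_k^B$ be the spanning tree with edge set $\{(v_0,v_1),(v_0,v_2)\}\cup\bigcup_{i=0}^{k-1}\{(v_{4i+1},v_{4i+4}),(v_{4i+2},v_{4i+3})\}\cup\bigcup_{i=0}^{k-2}\{(v_{4i+4},v_{4i+5}),(v_{4i+3},v_{4i+6})\}$. Let $T_1,\ldots,T_\ell$ be a shortest sequence of spanning trees of $G_k$ with $T_1=T_k^A$ and $T_\ell=T_k^B$ such that every pair of consecutive trees are adjacent (with respect to $a=v_0$). Then $\ell=\Omega(|V_k|^2)$, i.e., there is an absolute constant $c>0$ such that $\ell\ge c\,(4k+1)^2$ for all $k\ge1$.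
   Context: Given a connected graph $G=(V,E)$ with $n\ge 2$ vertices and a specified vertex $a\in V$, two spanning trees of $G$ are called adjacent if their intersection (the subgraph consisting of the edges common to both) contains a tree on $n-1$ vertices that includes $a$. *)

theory Defs
  imports Complex_Main
begin

definition reach :: "'v set set \<Rightarrow> 'v \<Rightarrow> 'v \<Rightarrow> bool" where
  "reach F u v \<longleftrightarrow> (\<lambda>x y. {x, y} \<in> F)\<^sup>*\<^sup>* u v"

definition is_graph :: "'v set \<Rightarrow> 'v set set \<Rightarrow> bool" where
  "is_graph W F \<longleftrightarrow> finite W \<and> (\<forall>e\<in>F. e \<subseteq> W \<and> card e = 2)"

definition connected_on :: "'v set \<Rightarrow> 'v set set \<Rightarrow> bool" where
  "connected_on W F \<longleftrightarrow> W \<noteq> {} \<and> (\<forall>u\<in>W. \<forall>v\<in>W. reach F u v)"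

definition acyclic_edges :: "'v set set \<Rightarrow> bool" where
  "acyclic_edges F \<longleftrightarrow> (\<forall>u v. {u, v} \<in> F \<and> u \<noteq> v \<longrightarrow> \<not> reach (F - {{u, v}}) u v)"

definition is_tree :: "'v set \<Rightarrow> 'v set set \<Rightarrow> bool" where
  "is_tree W F \<longleftrightarrow> is_graph W F \<and> connected_on W F \<and> acyclic_edges F"

definition spanning_tree :: "'v set \<Rightarrow> 'v set set \<Rightarrow> 'v set set \<Rightarrow> bool" where
  "spanning_tree V E T \<longleftrightarrow> T \<subseteq> E \<and> is_tree V T"

definition adjacent_trees :: "'v set \<Rightarrow> 'v \<Rightarrow> 'v set set \<Rightarrow> 'v set set \<Rightarrow> bool" where
  "adjacent_trees V a T1 T2 \<longleftrightarrow>
     (\<exists>W F. W \<subseteq> V \<and> card W = card V - 1 \<and> a \<in> W \<and> F \<subseteq> T1 \<inter> T2 \<and> is_tree W F)"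

definition Vk :: "nat \<Rightarrow> nat set" where
  "Vk k = {0..4*k}"

definition Ek :: "nat \<Rightarrow> nat set set" where
  "Ek k = {{0,1},{0,2}}
     \<union> (\<Union>i\<in>{..<k}. {{4*i+1,4*i+2},{4*i+2,4*i+3},{4*i+3,4*i+4},{4*i+4,4*i+1}})
     \<union> (\<Union>i\<in>{i. i + 1 < k}. {{4*i+4,4*i+5},{4*i+3,4*i+6}})"

definition TA :: "nat \<Rightarrow> nat set set" where
  "TA k = {{i, i+1} | i. i < 4*k}"

definition TB :: "nat \<Rightarrow> nat set set" where
  "TB k = {{0,1},{0,2}}
     \<union> (\<Union>i\<in>{..<k}. {{4*i+1,4*i+4},{4*i+2,4*i+3}})
     \<union> (\<Union>i\<in>{i. i + 1 < k}. {{4*i+4,4*i+5},{4*i+3,4*i+6}})"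

definition reconf_seq :: "nat \<Rightarrow> nat set set list \<Rightarrow> bool" where
  "reconf_seq k Ts \<longleftrightarrow> Ts \<noteq> [] \<and> hd Ts = TA k \<and> last Ts = TB k
     \<and> (\<forall>T\<in>set Ts. spanning_tree (Vk k) (Ek k) T)
     \<and> (\<forall>i. Suc i < length Ts \<longrightarrow> adjacent_trees (Vk k) 0 (Ts ! i) (Ts ! Suc i))"

end

theory Submission
  imports Defs
begin

text \<open>Group the vertices other than \<open>v0\<close> into the rungs \<open>{v(2m-1), v(2m)}\<close>, \<open>1 \<le> m \<le> 2k\<close>,
  of the ladder, and measure a spanning tree by the sum, over the rungs it contains, of the number
  of vertices that removing the rung cuts off from \<open>v0\<close>. The path \<open>T\<^sub>k\<^sup>A\<close> contains every rung,
  and rung \<open>m\<close> cuts off \<open>4k + 1 - 2m\<close> vertices, so its potential is quadratic in \<open>k\<close>;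
  \<open>T\<^sub>k\<^sup>B\<close> contains no rung at all.
  Two adjacent trees differ only in the edge attaching one leaf \<open>v\<close>, to \<open>x\<close> in one tree and
  to \<open>y\<close> in the other. A rung contributes more to the first tree than to the second only if it
  contains \<open>v\<close> or separates \<open>x\<close> from \<open>y\<close> in the common forest. Now \<open>x\<close> and \<open>y\<close> lie within one
  level of \<open>v\<close>, and a path crossing a far rung must cross every intermediate level twice, so at
  most one rung far above and one far below \<open>v\<close> can separate them. Hence a move lowers the
  potential by at most 5, and every reconfiguration sequence has \<open>\<Omega>(k\<^sup>2)\<close> trees.\<close>

lemma reach_refl [simp]: "reach F a a"
  by (simp add: reach_def)

lemma reach_edge: "{a, b} \<in> F \<Longrightarrow> reach F a b"
  by (simp add: reach_def r_into_rtranclp)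

lemma reach_trans: "reach F a b \<Longrightarrow> reach F b c \<Longrightarrow> reach F a c"
  unfolding reach_def by (rule rtranclp_trans)

lemma reach_step: "reach F a b \<Longrightarrow> {b, c} \<in> F \<Longrightarrow> reach F a c"
  unfolding reach_def by (rule rtranclp.rtrancl_into_rtrancl)

lemma reach_mono: "reach F a b \<Longrightarrow> F \<subseteq> G \<Longrightarrow> reach G a b"
  unfolding reach_def by (erule rtranclp_mono[THEN predicate2D, rotated]) auto

lemma reach_sym: "reach F a b \<Longrightarrow> reach F b a"
  unfolding reach_def
proof (induction rule: rtranclp_induct)
  case (step y z)
  then have "{z, y} \<in> F" by (simp add: insert_commute)
  with step show ?case by (meson converse_rtranclp_into_rtranclp)
qed simp

lemma reach_last_edge: "reach F a b \<Longrightarrow> a = b \<or> (\<exists>z. reach F a z \<and> {z, b} \<in> F)"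
  unfolding reach_def by (erule rtranclp.cases) auto

lemma reach_remove_edge:
  assumes "reach F x y"
  shows "reach (F - {e}) x y \<or>
    (\<exists>s t. e = {s, t} \<and> reach (F - {e}) x s \<and> reach (F - {e}) t y)"
  using assms unfolding reach_def[of F]
proof (induction rule: rtranclp_induct)
  case (step z c)
  show ?case
  proof (cases "{z, c} = e")
    case False
    then have zc: "{z, c} \<in> F - {e}" using step.hyps by simp
    from step.IH show ?thesis
    proof (elim disjE exE conjE)
      assume "reach (F - {e}) x z"
      then show ?thesis using zc by (intro disjI1) (rule reach_step)
    next
      fix s t assume "e = {s, t}" "reach (F - {e}) x s" "reach (F - {e}) t z"
      moreover from this(3) zc have "reach (F - {e}) t c" by (rule reach_step)
      ultimately show ?thesis by blast
    qed
  next
    case True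
    from step.IH show ?thesis
    proof (elim disjE exE conjE)
      assume "reach (F - {e}) x z"
      then show ?thesis using True by (intro disjI2 exI[of _ z] exI[of _ c]) simp
    next
      fix s t assume st: "e = {s, t}" "reach (F - {e}) x s"
      with True have "e = {s, c} \<or> s = c" by (auto simp: doubleton_eq_iff)
      then show ?thesis
      proof
        assume "e = {s, c}"
        with st(2) show ?thesis by (intro disjI2 exI[of _ s] exI[of _ c]) simp
      next
        assume "s = c"
        with st(2) show ?thesis by simp
      qed
    qed
  qed
qed simp

lemma reach_insert_pendant:
  assumes avoid: "\<forall>e\<in>F. v \<notin> e" and "s \<noteq> v"
  shows "reach (insert {v, x} F) s w \<longleftrightarrow> (if w = v then reach F s x else reach F s w)"
proof
  assume "reach (insert {v, x} F) s w"
  then have "(w \<noteq> v \<longrightarrow> reach F s w) \<and> (w = v \<longrightarrow> reach F s x)"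
    unfolding reach_def
  proof (induction rule: rtranclp_induct)
    case (step z c)
    show ?case
    proof (cases "{z, c} = {v, x}")
      case True
      then show ?thesis using step by (auto simp: doubleton_eq_iff)
    next
      case False
      then have zc: "{z, c} \<in> F" using step by simp
      then have "z \<noteq> v" "c \<noteq> v" using avoid by auto
      then show ?thesis using step zc by (meson rtranclp.rtrancl_into_rtrancl)
    qed
  qed (use \<open>s \<noteq> v\<close> in simp)
  then show "if w = v then reach F s x else reach F s w" by simp
next
  assume h: "if w = v then reach F s x else reach F s w"
  have sub: "F \<subseteq> insert {v, x} F" by blast
  show "reach (insert {v, x} F) s w"
  proof (cases "w = v")
    case True
    then have "{x, w} \<in> insert {v, x} F" by (simp add: insert_commute)
    with True h show ?thesis using reach_mono[OF _ sub] reach_step by metis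
  next
    case False
    with h show ?thesis using reach_mono[OF _ sub] by simp
  qed
qed

lemma tree_edge_notin_connecting_forest:
  assumes T: "is_tree V T" and FT: "F \<subseteq> T"
    and con: "\<forall>u\<in>V - {v}. \<forall>w\<in>V - {v}. reach F u w"
    and vx: "{v, x} \<in> T" "x \<in> V - {v}" and e: "e \<in> T" "e \<notin> F"
  shows "e = {v, x}"
proof -
  have acyc: "\<not> reach (T - {{s, t}}) s t" if "{s, t} \<in> T" "s \<noteq> t" for s t
    using T that unfolding is_tree_def acyclic_edges_def by blast
  have "e \<subseteq> V" "card e = 2" using T e(1) unfolding is_tree_def is_graph_def by auto
  then obtain s t where st: "e = {s, t}" "s \<noteq> t" "s \<in> V" "t \<in> V"
    by (metis card_2_iff insert_subset)
  have FT': "F \<subseteq> T - {e}" using FT e(2) by auto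
  show ?thesis
  proof (cases "v \<in> e")
    case False
    then have "reach F s t" using con st by auto
    then have "reach (T - {{s, t}}) s t" using FT' st(1) by (auto intro: reach_mono)
    then show ?thesis using acyc st e(1) by auto
  next
    case True
    then obtain t' where t': "e = {v, t'}" "t' \<noteq> v" "t' \<in> V" using st by auto
    show ?thesis
    proof (rule ccontr)
      assume "e \<noteq> {v, x}"
      then have "{v, x} \<in> T - {e}" using vx by auto
      then have "reach (T - {e}) v x" by (rule reach_edge)
      moreover have "reach (T - {e}) x t'" using con vx t' FT' reach_mono[of F x t'] by auto
      ultimately have "reach (T - {{v, t'}}) v t'" unfolding t'(1) by (rule reach_trans)
      then show False using acyc t' e(1) by auto
    qed
  qed
qed

lemma tree_eq_insert_leaf_edge:
  assumes T: "is_tree V T" and FT: "F \<subseteq> T"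
    and con: "\<forall>u\<in>V - {v}. \<forall>w\<in>V - {v}. reach F u w"
    and "v \<in> V" "a \<in> V" "a \<noteq> v"
  obtains x where "x \<in> V - {v}" "T = insert {v, x} F"
proof -
  have "reach T a v" using T assms(4-6) unfolding is_tree_def connected_on_def by auto
  with \<open>a \<noteq> v\<close> obtain x where "{x, v} \<in> T" using reach_last_edge by metis
  then have vx: "{v, x} \<in> T" by (simp add: insert_commute)
  moreover have "x \<in> V - {v}"
  proof -
    have "{v, x} \<subseteq> V \<and> card {v, x} = 2" using T vx unfolding is_tree_def is_graph_def by blast
    then show ?thesis by (cases "x = v") auto
  qed
  moreover have "T = insert {v, x} F"
    using tree_edge_notin_connecting_forest[OF T FT con vx \<open>x \<in> V - {v}\<close>] FT vx by blast
  ultimately show thesis using that by blast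
qed

lemma adjacent_trees_swap_leaf_edge:
  assumes T1: "is_tree V T1" and T2: "is_tree V T2" and adj: "adjacent_trees V a T1 T2"
  obtains v x y F where "v \<in> V" "v \<noteq> a" "\<forall>e\<in>F. v \<notin> e"
    "\<forall>u\<in>V - {v}. \<forall>w\<in>V - {v}. reach F u w"
    "x \<in> V - {v}" "y \<in> V - {v}" "T1 = insert {v, x} F" "T2 = insert {v, y} F"
proof -
  obtain W F where WF: "W \<subseteq> V" "card W = card V - 1" "a \<in> W" "F \<subseteq> T1 \<inter> T2" "is_tree W F"
    using adj unfolding adjacent_trees_def by blast
  have "finite V" "V \<noteq> {}" using T1 unfolding is_tree_def is_graph_def connected_on_def by auto
  then have "card (V - W) = 1"
    using WF(1,2) by (simp add: card_Diff_subset finite_subset card_gt_0_iff Suc_le_eq)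
  then obtain v where v: "V - W = {v}" by (auto simp: card_1_singleton_iff)
  then have W: "W = V - {v}" using WF(1) by auto
  have avoid: "\<forall>e\<in>F. v \<notin> e" and con: "\<forall>u\<in>V - {v}. \<forall>w\<in>V - {v}. reach F u w"
    using WF(5) W unfolding is_tree_def is_graph_def connected_on_def by auto
  have "v \<in> V" "a \<in> V" "a \<noteq> v" using v W WF(1,3) by auto
  moreover obtain x where "x \<in> V - {v}" "T1 = insert {v, x} F"
    using tree_eq_insert_leaf_edge[OF T1 _ con] WF(4) calculation by blast
  moreover obtain y where "y \<in> V - {v}" "T2 = insert {v, y} F"
    using tree_eq_insert_leaf_edge[OF T2 _ con] WF(4) calculation by blast
  ultimately show thesis using that avoid con by blast
qed

definition cut_off :: "'v set \<Rightarrow> 'v \<Rightarrow> 'v set set \<Rightarrow> 'v set \<Rightarrow> nat" where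
  "cut_off V a T e = (if e \<in> T then card {w \<in> V. \<not> reach (T - {e}) a w} else 0)"

definition separates :: "'v set set \<Rightarrow> 'v set \<Rightarrow> 'v \<Rightarrow> 'v \<Rightarrow> bool" where
  "separates F e x y \<longleftrightarrow> e \<in> F \<and> \<not> reach (F - {e}) x y"

lemma card_unreachable_insert_pendant:
  assumes "finite V" "v \<in> V" "a \<noteq> v" and avoid: "\<forall>e\<in>F. v \<notin> e"
  shows "card {w \<in> V. \<not> reach (insert {v, x} F) a w}
       = card {w \<in> V - {v}. \<not> reach F a w} + (if reach F a x then 0 else 1)"
proof -
  have "{w \<in> V. \<not> reach (insert {v, x} F) a w}
      = {w \<in> V - {v}. \<not> reach F a w} \<union> (if reach F a x then {} else {v})"
    using reach_insert_pendant[OF avoid \<open>a \<noteq> v\<close>] \<open>v \<in> V\<close> by auto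
  then show ?thesis using \<open>finite V\<close> by (auto simp: card_Un_disjoint)
qed

lemma cut_off_swap_leaf_edge:
  assumes "finite V" "v \<in> V" "a \<in> V" "a \<noteq> v" and avoid: "\<forall>e\<in>F. v \<notin> e"
    and con: "\<forall>u\<in>V - {v}. \<forall>w\<in>V - {v}. reach F u w"
  shows "cut_off V a (insert {v, x} F) e
    \<le> cut_off V a (insert {v, y} F) e + (if v \<in> e \<or> separates F e x y then 1 else 0)"
proof (cases "e \<in> F")
  case True
  have avoid': "\<forall>e'\<in>F - {e}. v \<notin> e'" using avoid by auto
  have "{v, z} \<noteq> e" for z using True avoid by auto
  then have "insert {v, z} F - {e} = insert {v, z} (F - {e})" for z by auto
  then have cut: "cut_off V a (insert {v, z} F) e = card {w \<in> V - {v}. \<not> reach (F - {e}) a w}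
      + (if reach (F - {e}) a z then 0 else 1)" for z
    using True card_unreachable_insert_pendant[OF assms(1,2,4) avoid'] by (simp add: cut_off_def)
  have "separates F e x y" if "\<not> reach (F - {e}) a x" "reach (F - {e}) a y"
    using that True reach_trans reach_sym unfolding separates_def by metis
  then show ?thesis unfolding cut by auto
next
  case False
  show ?thesis
  proof (cases "e \<in> insert {v, x} F")
    case True
    with False have e: "e = {v, x}" by simp
    have "{w \<in> V. \<not> reach F a w} \<subseteq> {v}" using con assms(3,4) by auto
    then have "card {w \<in> V. \<not> reach F a w} \<le> 1"
      using card_mono[of "{v}"] by fastforce
    moreover have "insert {v, x} F - {e} = F" using False e by auto
    ultimately show ?thesis using True e by (simp add: cut_off_def)
  qed (simp add: cut_off_def)
qed

lemma reach_intermediate_level: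
  fixes f :: "'v \<Rightarrow> nat"
  assumes "reach E a b" and lip: "\<And>u w. {u, w} \<in> E \<Longrightarrow> f u \<le> f w + 1"
    and "f a \<le> m \<and> m \<le> f b \<or> f b \<le> m \<and> m \<le> f a"
  shows "\<exists>z. f z = m \<and> reach E a z \<and> reach E z b"
  using assms(1,3) unfolding reach_def[of E]
proof (induction arbitrary: m rule: rtranclp_induct)
  case (step b c)
  have "{c, b} \<in> E" using step.hyps(2) by (simp add: insert_commute)
  then have "f b \<le> f c + 1" "f c \<le> f b + 1" using lip step.hyps(2) by blast+
  show ?case
  proof (cases "f a \<le> m \<and> m \<le> f b \<or> f b \<le> m \<and> m \<le> f a")
    case True
    then obtain z where "f z = m" "reach E a z" "reach E z b"
      using step.IH unfolding reach_def by blast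
    moreover from this(3) step.hyps(2) have "reach E z c" by (rule reach_step)
    ultimately show ?thesis unfolding reach_def by blast
  next
    case False
    then have "m = f c" using step.prems \<open>f b \<le> f c + 1\<close> \<open>f c \<le> f b + 1\<close> by linarith
    moreover have "(\<lambda>x y. {x, y} \<in> E)\<^sup>*\<^sup>* a c"
      using step.hyps by (rule rtranclp.rtrancl_into_rtrancl)
    ultimately show ?thesis by auto
  qed
next
  case base
  then show ?case by auto
qed

text \<open>A path from \<open>x\<close> to \<open>y\<close> through the edge \<open>e\<close> crosses level \<open>p\<close> once before and once
  after \<open>e\<close>; if level \<open>p\<close> is connected without \<open>e\<close>, the detour through \<open>e\<close> can be cut out.\<close>
lemma reach_without_edge_beyond_level:
  fixes f :: "'v \<Rightarrow> nat"
  assumes xy: "reach F x y" and lip: "\<And>u w. {u, w} \<in> F \<Longrightarrow> f u \<le> f w + 1"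
    and e: "\<forall>s\<in>e. f s = q"
    and p: "f x \<le> p \<and> f y \<le> p \<and> p \<le> q \<or> q \<le> p \<and> p \<le> f x \<and> p \<le> f y"
    and level: "\<And>z z'. f z = p \<Longrightarrow> f z' = p \<Longrightarrow> reach (F - {e}) z z'"
  shows "reach (F - {e}) x y"
  using reach_remove_edge[OF xy, of e]
proof (elim disjE exE conjE)
  fix s t assume st: "e = {s, t}" "reach (F - {e}) x s" "reach (F - {e}) t y"
  have lip': "\<And>u w. {u, w} \<in> F - {e} \<Longrightarrow> f u \<le> f w + 1" using lip by blast
  have "f s = q" "f t = q" using e st(1) by auto
  then have "f x \<le> p \<and> p \<le> f s \<or> f s \<le> p \<and> p \<le> f x"
    and "f t \<le> p \<and> p \<le> f y \<or> f y \<le> p \<and> p \<le> f t" using p by auto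
  then obtain z z' where "f z = p" "reach (F - {e}) x z" "f z' = p" "reach (F - {e}) z' y"
    using reach_intermediate_level[where f = f, OF st(2) lip'] reach_intermediate_level[where f = f, OF st(3) lip']
    by blast
  then show ?thesis using level by (blast intro: reach_trans)
qed

definition level :: "nat \<Rightarrow> nat" where
  "level j = (j + 1) div 2"

definition rung :: "nat \<Rightarrow> nat set" where
  "rung m = {2*m - 1, 2*m}"

lemma level_Ek_edge: "{u, w} \<in> Ek k \<Longrightarrow> level u \<le> level w + 1"
  unfolding Ek_def level_def by (auto simp: doubleton_eq_iff)

lemma level_eq_iff_mem_rung: "1 \<le> m \<Longrightarrow> level z = m \<longleftrightarrow> z \<in> rung m"
  unfolding level_def rung_def by auto

lemma rung_eq_iff: "1 \<le> p \<Longrightarrow> 1 \<le> q \<Longrightarrow> rung p = rung q \<longleftrightarrow> p = q"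
  unfolding rung_def by (auto simp: doubleton_eq_iff)

lemma not_separates_rung_beyond_rung:
  assumes xy: "reach F x y" and F: "F \<subseteq> Ek k" and "rung p \<in> F"
    and "1 \<le> p" "1 \<le> q" "p \<noteq> q"
    and beyond: "level x \<le> p \<and> level y \<le> p \<and> p \<le> q \<or> q \<le> p \<and> p \<le> level x \<and> p \<le> level y"
  shows "\<not> separates F (rung q) x y"
proof -
  have "rung p \<in> F - {rung q}" using assms(3-6) rung_eq_iff by auto
  then have "reach (F - {rung q}) z z'" if "level z = p" "level z' = p" for z z'
  proof (cases "z = z'")
    case False
    with that have "rung p = {z, z'}"
      unfolding level_eq_iff_mem_rung[OF \<open>1 \<le> p\<close>] by (auto simp: rung_def)
    with \<open>rung p \<in> F - {rung q}\<close> show ?thesis by (metis reach_edge)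
  qed simp
  moreover have "\<forall>s\<in>rung q. level s = q" using level_eq_iff_mem_rung[OF \<open>1 \<le> q\<close>] by blast
  ultimately have "reach (F - {rung q}) x y"
    using reach_without_edge_beyond_level[OF xy _ _ beyond] F level_Ek_edge by blast
  then show ?thesis unfolding separates_def by blast
qed

lemma card_separating_rungs_above:
  assumes "reach F x y" "F \<subseteq> Ek k" "level x \<le> h" "level y \<le> h"
  shows "card {m \<in> {1..2*k}. h < m \<and> separates F (rung m) x y} \<le> 1"
proof -
  have "p = q" if "p \<in> {1..2*k}" "h < p" "separates F (rung p) x y"
    "q \<in> {1..2*k}" "h < q" "separates F (rung q) x y" for p q
    using not_separates_rung_beyond_rung[OF assms(1,2), of p q]
      not_separates_rung_beyond_rung[OF assms(1,2), of q p] that assms(3,4)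
    unfolding separates_def by (cases p q rule: linorder_cases) auto
  then show ?thesis by (auto simp: card_le_Suc0_iff_eq)
qed

lemma card_separating_rungs_below:
  assumes "reach F x y" "F \<subseteq> Ek k" "l \<le> level x" "l \<le> level y"
  shows "card {m \<in> {1..2*k}. m < l \<and> separates F (rung m) x y} \<le> 1"
proof -
  have "p = q" if "p \<in> {1..2*k}" "p < l" "separates F (rung p) x y"
    "q \<in> {1..2*k}" "q < l" "separates F (rung q) x y" for p q
    using not_separates_rung_beyond_rung[OF assms(1,2), of p q]
      not_separates_rung_beyond_rung[OF assms(1,2), of q p] that assms(3,4)
    unfolding separates_def by (cases p q rule: linorder_cases) auto
  then show ?thesis by (auto simp: card_le_Suc0_iff_eq)
qed

definition rung_potential :: "nat \<Rightarrow> nat set set \<Rightarrow> nat" where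
  "rung_potential k T = (\<Sum>m\<in>{1..2*k}. cut_off (Vk k) 0 T (rung m))"

lemma card_changed_rungs_le_5:
  assumes "reach F x y" "F \<subseteq> Ek k" "{v, x} \<in> Ek k" "{v, y} \<in> Ek k"
  shows "card ({1..2*k} \<inter> {m. v \<in> rung m \<or> separates F (rung m) x y}) \<le> 5"
proof -
  let ?S = "\<lambda>P. {m \<in> {1..2*k}. P m \<and> separates F (rung m) x y}"
  have lx: "level v - 1 \<le> level x" "level x \<le> level v + 1"
    and ly: "level v - 1 \<le> level y" "level y \<le> level v + 1"
    using assms(3,4) level_Ek_edge[of v x k] level_Ek_edge[of x v k]
      level_Ek_edge[of v y k] level_Ek_edge[of y v k] by (auto simp: insert_commute)
  let ?W = "{level v - 1..level v + 1}"
  have "{1..2*k} \<inter> {m. v \<in> rung m \<or> separates F (rung m) x y}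
      \<subseteq> ?W \<union> ?S (\<lambda>m. level v + 1 < m) \<union> ?S (\<lambda>m. m < level v - 1)"
  proof
    fix m assume m: "m \<in> {1..2*k} \<inter> {m. v \<in> rung m \<or> separates F (rung m) x y}"
    then have "v \<in> rung m \<Longrightarrow> level v = m" using level_eq_iff_mem_rung[of m v] by auto
    with m show "m \<in> ?W \<union> ?S (\<lambda>m. level v + 1 < m) \<union> ?S (\<lambda>m. m < level v - 1)" by auto
  qed
  then have "card ({1..2*k} \<inter> {m. v \<in> rung m \<or> separates F (rung m) x y})
      \<le> card (?W \<union> ?S (\<lambda>m. level v + 1 < m) \<union> ?S (\<lambda>m. m < level v - 1))"
    by (rule card_mono[rotated]) simp
  also have "\<dots> \<le> card ?W + card (?S (\<lambda>m. level v + 1 < m)) + card (?S (\<lambda>m. m < level v - 1))"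
    by (meson card_Un_le add_le_mono le_refl order_trans)
  finally have "card ({1..2*k} \<inter> {m. v \<in> rung m \<or> separates F (rung m) x y})
      \<le> card ?W + card (?S (\<lambda>m. level v + 1 < m)) + card (?S (\<lambda>m. m < level v - 1))" .
  moreover have "card {level v - 1..level v + 1} \<le> 3" by simp
  ultimately show ?thesis
    using card_separating_rungs_above[OF assms(1,2) lx(2) ly(2)]
      card_separating_rungs_below[OF assms(1,2) lx(1) ly(1)] by linarith
qed

lemma rung_potential_adjacent:
  assumes T1: "spanning_tree (Vk k) (Ek k) T1" and T2: "spanning_tree (Vk k) (Ek k) T2"
    and adj: "adjacent_trees (Vk k) 0 T1 T2"
  shows "rung_potential k T1 \<le> rung_potential k T2 + 5"
proof -
  have "is_tree (Vk k) T1" "is_tree (Vk k) T2" using T1 T2 unfolding spanning_tree_def by auto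
  then obtain v x y F where vV: "v \<in> Vk k" "v \<noteq> 0" and avoid: "\<forall>e\<in>F. v \<notin> e"
    and con: "\<forall>u\<in>Vk k - {v}. \<forall>w\<in>Vk k - {v}. reach F u w"
    and xy: "x \<in> Vk k - {v}" "y \<in> Vk k - {v}"
    and T1F: "T1 = insert {v, x} F" and T2F: "T2 = insert {v, y} F"
    using adj by (rule adjacent_trees_swap_leaf_edge)
  let ?D = "{m. v \<in> rung m \<or> separates F (rung m) x y}"
  have E: "T1 \<subseteq> Ek k" "T2 \<subseteq> Ek k" using T1 T2 unfolding spanning_tree_def by auto
  have "0 \<in> Vk k" "finite (Vk k)" by (simp_all add: Vk_def)
  then have "cut_off (Vk k) 0 T1 (rung m) \<le> cut_off (Vk k) 0 T2 (rung m) + (if m \<in> ?D then 1 else 0)"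
    for m
    using cut_off_swap_leaf_edge[OF _ vV(1) _ _ avoid con] vV(2) unfolding T1F T2F by simp
  then have "rung_potential k T1 \<le> (\<Sum>m\<in>{1..2*k}. cut_off (Vk k) 0 T2 (rung m) + (if m \<in> ?D then 1 else 0))"
    unfolding rung_potential_def by (rule sum_mono)
  also have "\<dots> = rung_potential k T2 + card ({1..2*k} \<inter> ?D)"
    unfolding rung_potential_def by (simp add: sum.distrib sum.If_cases)
  also have "card ({1..2*k} \<inter> ?D) \<le> 5"
  proof (rule card_changed_rungs_le_5)
    show "reach F x y" using con xy by blast
    show "F \<subseteq> Ek k" "{v, x} \<in> Ek k" "{v, y} \<in> Ek k" using E unfolding T1F T2F by auto
  qed
  finally show ?thesis by simp
qed

lemma rung_potential_TB: "rung_potential k (TB k) = 0"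
proof -
  have "rung m \<notin> TB k" if "1 \<le> m" for m
    using that unfolding TB_def rung_def by (auto simp: doubleton_eq_iff; arith)
  then show ?thesis unfolding rung_potential_def cut_off_def by simp
qed

lemma rung_mem_TA: "1 \<le> m \<Longrightarrow> m \<le> 2*k \<Longrightarrow> rung m \<in> TA k"
  unfolding TA_def rung_def by (rule CollectI, rule exI[of _ "2*m - 1"]) auto

lemma reach_TA_without_rung:
  assumes "reach (TA k - {rung m}) 0 w" "1 \<le> m"
  shows "w < 2*m"
  using assms(1) unfolding reach_def
proof (induction rule: rtranclp_induct)
  case (step z c)
  then obtain i where "{z, c} = {i, i + 1}" "{z, c} \<noteq> {2*m - 1, 2*m}"
    unfolding TA_def rung_def by auto
  then show ?case using step.IH assms(2) by (auto simp: doubleton_eq_iff)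
qed (use assms(2) in simp)

lemma cut_off_TA_rung:
  assumes "1 \<le> m" "m \<le> 2*k"
  shows "4*k + 1 - 2*m \<le> cut_off (Vk k) 0 (TA k) (rung m)"
proof -
  have "{2*m..4*k} \<subseteq> {w \<in> Vk k. \<not> reach (TA k - {rung m}) 0 w}"
    using reach_TA_without_rung[OF _ assms(1)] by (force simp: Vk_def)
  then have "card {2*m..4*k} \<le> card {w \<in> Vk k. \<not> reach (TA k - {rung m}) 0 w}"
    by (rule card_mono[rotated]) (simp add: Vk_def)
  then show ?thesis unfolding cut_off_def using rung_mem_TA[OF assms] by simp
qed

lemma rung_potential_TA: "k * (2*k + 1) \<le> rung_potential k (TA k)"
proof -
  have "k * (2*k + 1) = (\<Sum>m\<in>{1..k}. 2*k + 1)" by simp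
  also have "\<dots> \<le> (\<Sum>m\<in>{1..k}. cut_off (Vk k) 0 (TA k) (rung m))"
  proof (rule sum_mono)
    fix m assume "m \<in> {1..k}"
    then show "2*k + 1 \<le> cut_off (Vk k) 0 (TA k) (rung m)" using cut_off_TA_rung[of m k] by auto
  qed
  also have "\<dots> \<le> rung_potential k (TA k)"
    unfolding rung_potential_def by (rule sum_mono2) auto
  finally show ?thesis .
qed

lemma hd_le_last_plus_steps:
  fixes \<phi> :: "'a \<Rightarrow> nat"
  assumes "xs \<noteq> []" and step: "\<forall>i. Suc i < length xs \<longrightarrow> \<phi> (xs ! i) \<le> \<phi> (xs ! Suc i) + c"
  shows "\<phi> (hd xs) \<le> \<phi> (last xs) + c * (length xs - 1)"
proof -
  have "\<phi> (xs ! 0) \<le> \<phi> (xs ! i) + c * i" if "i < length xs" for i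
    using that
  proof (induction i)
    case (Suc i)
    then show ?case using step by fastforce
  qed simp
  from this[of "length xs - 1"] \<open>xs \<noteq> []\<close> show ?thesis
    by (simp add: hd_conv_nth last_conv_nth)
qed

lemma reconf_seq_length_lower_bound:
  assumes "reconf_seq k Ts"
  shows "k * (2*k + 1) \<le> 5 * (length Ts - 1)"
proof -
  have "rung_potential k (hd Ts) \<le> rung_potential k (last Ts) + 5 * (length Ts - 1)"
    using assms rung_potential_adjacent unfolding reconf_seq_def
    by (intro hd_le_last_plus_steps) (auto simp: nth_mem)
  then show ?thesis
    using assms rung_potential_TA[of k] rung_potential_TB[of k] unfolding reconf_seq_def by simp
qed

theorem theorem2:
  shows "\<exists>c::real. c > 0 \<and>
    (\<forall>k\<ge>1. \<forall>Ts. reconf_seq k Ts \<longrightarrow> real (length Ts) \<ge> c * (real (4*k+1))^2)"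
proof (intro exI[of _ "1/100"] conjI allI impI)
  fix k :: nat and Ts assume "k \<ge> 1" and seq: "reconf_seq k Ts"
  have "length Ts \<ge> 1" using seq unfolding reconf_seq_def by (simp add: Suc_le_eq)
  moreover have "k * k \<ge> k" using \<open>k \<ge> 1\<close> by simp
  ultimately have "(4*k + 1)^2 \<le> 100 * length Ts"
    using reconf_seq_length_lower_bound[OF seq] by (simp add: power2_eq_square algebra_simps)
  then have "real ((4*k + 1)^2) \<le> real (100 * length Ts)" by (simp only: of_nat_le_iff)
  then show "1/100 * (real (4*k+1))^2 \<le> real (length Ts)" by simp
qed simp

end
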